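(* Let $N\ge2$ and $T,\mu>0$. Let $x(t)=(x_1(t),\dots,x_N(t))$, $x_k(t)\in\mathbb{R}$, be a (Carathéodory) solution of $$\dot x_k(t)=\frac1N\sum_{l=1}^N M_{kl}(t)(x_l-x_k),\qquad k=1,\dots,N,$$ with Lebesgue measurable $M_{kl}:[0,+\infty)\to[0,1]$, such that $x_k(0)\ge\alpha$ for all $k$. Assume that the $(T,\mu)$-connectivity graph at time $0$, $G(0)$, contains the directed edge $i\to j$, i.e. $\frac1T\int_0^T M_{ij}(s)\,ds\ge\mu$. Then $$x_i(T)\ge\alpha+\eta\exp\!\left(-2\tfrac{N-1}{N}T\right)(x_j(0)-\alpha),\qquad \eta=\frac{\mu T}{N+\mu T}.$$
   Context: Given $T,\mu>0$, the $(T,\mu)$-connectivity graph at time $t\ge0$ is the directed graph $G(t)$ on nodes $\{1,\dots,N\}$ in which the arrow $i\to j$ exists iff $\frac1T\int_t^{t+T}M_{ij}(s)\,ds\ge\mu$. *)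

theory Defs
  imports "HOL-Analysis.Analysis"
begin

text \<open>Nodes are 1..N. The arrow i -> j belongs to the (T,mu)-connectivity graph G(t).\<close>
definition conn_edge ::
  "real \<Rightarrow> real \<Rightarrow> (nat \<Rightarrow> nat \<Rightarrow> real \<Rightarrow> real) \<Rightarrow> real \<Rightarrow> nat \<Rightarrow> nat \<Rightarrow> bool" where
  "conn_edge T \<mu> M t i j \<longleftrightarrow> (1 / T) * integral {t..t+T} (M i j) \<ge> \<mu>"

definition cons_rhs ::
  "nat \<Rightarrow> (nat \<Rightarrow> nat \<Rightarrow> real \<Rightarrow> real) \<Rightarrow> (nat \<Rightarrow> real \<Rightarrow> real) \<Rightarrow> nat \<Rightarrow> real \<Rightarrow> real" where
  "cons_rhs N M x k s = (1 / real N) * (\<Sum>l\<in>{1..N}. M k l s * (x l s - x k s))"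

text \<open>Caratheodory solution on [0,+inf): each x_k is the integral of the right-hand side
  (absolutely integrable on every [0,t]), i.e. x_k is absolutely continuous and satisfies
  the ODE almost everywhere.\<close>
definition caratheodory_solution ::
  "nat \<Rightarrow> (nat \<Rightarrow> nat \<Rightarrow> real \<Rightarrow> real) \<Rightarrow> (nat \<Rightarrow> real \<Rightarrow> real) \<Rightarrow> bool" where
  "caratheodory_solution N M x \<longleftrightarrow>
     (\<forall>k\<in>{1..N}. \<forall>t\<ge>0.
        cons_rhs N M x k absolutely_integrable_on {0..t} \<and>
        (cons_rhs N M x k has_integral (x k t - x k 0)) {0..t})"

end

theory Submission
  imports Defs
begin

(* Write y_k = x_k - alpha and c = (N - 1) / N.  The minimum of the states is nondecreasing,
  so all y_k stay nonnegative, and dropping all summands of the right-hand side but one gives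
  y_k' >= M_kl y_l / N - c y_k for every l ~= k.  Comparison with exp (- c t) (Gronwall) first
  gives y_j t >= exp (- c t) y_j 0 and then, for agent i and l = j,
  y_i T >= exp (- c T) / N * (integral of M_ij y_j over [0,T]) >= (mu T / N) exp (- 2 c T) y_j 0,
  which is at least the claimed bound as eta <= mu T / N.  Solutions are only absolutely
  continuous, so monotonicity is derived from a one-sided Dini-derivative bound instead of the
  mean value theorem. *)

lemma lower_right_Dini_nonneg_imp_increasing:
  fixes F :: "real \<Rightarrow> real"
  assumes "a \<le> b" and cont: "continuous_on {a..b} F"
    and Dini: "\<And>s e. s \<in> {a..<b} \<Longrightarrow> 0 < e \<Longrightarrow>
      \<forall>\<^sub>F t in at_right s. F s - e * (t - s) \<le> F t"
  shows "F a \<le> F b"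
proof (cases "a = b")
  case False
  with \<open>a \<le> b\<close> have "a < b" by simp
  have slope: "F a - e * (b - a) \<le> F b" if "0 < e" for e
  proof -
    \<comment> \<open>The Dini bound pushes the supremum of S beyond any point below b.\<close>
    define S where "S = {t \<in> {a..b}. F a - e * (t - a) \<le> F t}"
    have "closed S"
      unfolding S_def by (intro continuous_on_closed_Collect_le continuous_intros cont closed_atLeastAtMost)
    moreover have "a \<in> S" "bdd_above S"
      using \<open>a \<le> b\<close> unfolding S_def by (auto intro: bdd_aboveI[of _ b])
    ultimately have "Sup S \<in> S" using closed_contains_Sup by blast
    have "Sup S = b"
    proof (rule ccontr)
      assume "Sup S \<noteq> b"
      with \<open>Sup S \<in> S\<close> have \<tau>: "Sup S \<in> {a..<b}" unfolding S_def by auto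
      have "\<forall>\<^sub>F t in at_right (Sup S). Sup S < t \<and> t < b \<and> F (Sup S) - e * (t - Sup S) \<le> F t"
        using \<tau> by (intro eventually_conj eventually_at_right_less eventually_at_rightI[of "Sup S" b]
          Dini \<open>0 < e\<close>) auto
      then obtain t where t: "Sup S < t" "t < b" "F (Sup S) - e * (t - Sup S) \<le> F t"
        using eventually_happens' trivial_limit_at_right_real by blast
      with \<open>Sup S \<in> S\<close> have "t \<in> S" unfolding S_def by (auto simp: algebra_simps)
      then have "t \<le> Sup S" using \<open>bdd_above S\<close> by (rule cSup_upper)
      with t show False by simp
    qed
    with \<open>Sup S \<in> S\<close> show ?thesis unfolding S_def by simp
  qed
  show ?thesis
  proof (rule field_le_epsilon)
    fix e :: real assume "0 < e"
    with \<open>a < b\<close> have "F a - e / (b - a) * (b - a) \<le> F b" by (intro slope) simp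
    with \<open>a < b\<close> show "F a \<le> F b + e" by simp
  qed
qed simp

lemma eventually_at_right_Icc_dist_less:
  fixes f :: "real \<Rightarrow> 'a::metric_space"
  assumes "continuous_on {a..b} f" "a \<le> s" "s < b" "0 < e"
  shows "\<forall>\<^sub>F t in at_right s. \<forall>r\<in>{s..t}. dist (f r) (f s) < e"
proof -
  have "continuous_on {s..b} f" using assms(1) by (rule continuous_on_subset) (use assms(2) in auto)
  then have "(f \<longlongrightarrow> f s) (at_right s)" using \<open>s < b\<close> by (rule continuous_on_Icc_at_rightD)
  then obtain d where "d > s" "\<And>r. s < r \<Longrightarrow> r < d \<Longrightarrow> dist (f r) (f s) < e"
    using tendstoD[OF _ \<open>0 < e\<close>] by (metis eventually_at_right_field)
  then show ?thesis
    using \<open>0 < e\<close> unfolding eventually_at_right_field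
    by (intro exI[of _ d]) (auto simp: le_less)
qed

lemma continuous_on_if_integral_increments:
  fixes y g :: "real \<Rightarrow> real"
  assumes "\<And>t. t \<in> {a..b} \<Longrightarrow> (g has_integral (y t - y a)) {a..t}"
  shows "continuous_on {a..b} y"
proof (cases "a \<le> b")
  case True
  then have "g integrable_on {a..b}" using assms[of b] by auto
  then have "continuous_on {a..b} (\<lambda>t. y a + integral {a..t} g)"
    by (intro continuous_intros indefinite_integral_continuous_1)
  moreover have "y a + integral {a..t} g = y t" if "t \<in> {a..b}" for t
    using assms[OF that] by (simp add: integral_unique)
  ultimately show ?thesis by (rule continuous_on_eq)
qed simp

lemma continuous_on_Min:
  fixes f :: "'i \<Rightarrow> 'a::topological_space \<Rightarrow> real"
  assumes "finite A" "A \<noteq> {}" "\<And>k. k \<in> A \<Longrightarrow> continuous_on S (f k)"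
  shows "continuous_on S (\<lambda>t. Min ((\<lambda>k. f k t) ` A))"
  using assms
proof (induction A rule: finite_ne_induct)
  case (insert a A)
  then have "(\<lambda>t. Min ((\<lambda>k. f k t) ` insert a A)) = (\<lambda>t. min (f a t) (Min ((\<lambda>k. f k t) ` A)))"
    by auto
  with insert show ?case by (auto intro!: continuous_intros)
qed simp

lemma exp_weighted_increment_ge:
  fixes y g q :: "real \<Rightarrow> real"
  assumes "0 \<le> c" "a \<le> s" "s \<le> t" "0 \<le> y t"
    and increment: "(g has_integral (y t - y s)) {s..t}"
    and q: "(q has_integral I) {s..t}" "0 \<le> I"
    and g_ge: "\<And>r. r \<in> {s..t} \<Longrightarrow> q r - c * (y t + \<eta>) \<le> g r"
  shows "exp (c * (s - a)) * (y s - c * \<eta> * (t - s)) + I \<le> exp (c * (t - a)) * y t"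
proof -
  define E where "E = exp (c * (s - a))"
  have "1 \<le> E" unfolding E_def using assms(1,2) by simp
  have "I - (t - s) * (c * (y t + \<eta>)) \<le> y t - y s"
    using has_integral_le[OF has_integral_diff[OF q(1) has_integral_const_real] increment] g_ge
      \<open>s \<le> t\<close> by auto
  then have "E * (I - (t - s) * (c * (y t + \<eta>))) \<le> E * (y t - y s)"
    using \<open>1 \<le> E\<close> by (intro mult_left_mono) auto
  moreover have "I \<le> E * I" using \<open>1 \<le> E\<close> \<open>0 \<le> I\<close> by (simp add: mult_le_cancel_right1)
  moreover have "E * (1 + c * (t - s)) \<le> E * exp (c * (t - s))"
    using \<open>1 \<le> E\<close> by (intro mult_left_mono exp_ge_add_one_self) auto
  then have "E * (1 + c * (t - s)) * y t \<le> exp (c * (t - a)) * y t"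
    using \<open>0 \<le> y t\<close> unfolding E_def by (intro mult_right_mono) (auto simp: exp_add[symmetric] algebra_simps)
  ultimately show ?thesis unfolding E_def by (simp add: algebra_simps)
qed

lemma Gronwall_lower_bound:
  fixes y g q :: "real \<Rightarrow> real"
  assumes "0 \<le> c" "a \<le> b"
    and increments: "\<And>s t. a \<le> s \<Longrightarrow> s \<le> t \<Longrightarrow> t \<le> b \<Longrightarrow> (g has_integral (y t - y s)) {s..t}"
    and y_nonneg: "\<And>r. r \<in> {a..b} \<Longrightarrow> 0 \<le> y r"
    and q_integrable: "q integrable_on {a..b}" and q_nonneg: "\<And>r. r \<in> {a..b} \<Longrightarrow> 0 \<le> q r"
    and g_ge: "\<And>r. r \<in> {a..b} \<Longrightarrow> q r - c * y r \<le> g r"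
  shows "y a + integral {a..b} q \<le> exp (c * (b - a)) * y b"
proof -
  define F where "F t = exp (c * (t - a)) * y t - integral {a..t} q" for t
  have y_cont: "continuous_on {a..b} y"
    by (rule continuous_on_if_integral_increments) (use increments in auto)
  have "F a \<le> F b"
  proof (rule lower_right_Dini_nonneg_imp_increasing[OF \<open>a \<le> b\<close>])
    show "continuous_on {a..b} F"
      unfolding F_def by (intro continuous_intros y_cont indefinite_integral_continuous_1 q_integrable)
    fix s e :: real assume s: "s \<in> {a..<b}" and "0 < e"
    define \<eta> where "\<eta> = e / (c * exp (c * (s - a)) + 1)"
    have "0 \<le> c * exp (c * (s - a))" using \<open>0 \<le> c\<close> by simp
    then have "0 < \<eta>" "c * \<eta> * exp (c * (s - a)) \<le> e"
      using \<open>0 < e\<close> unfolding \<eta>_def by (auto simp: field_simps)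
    have "\<forall>\<^sub>F t in at_right s. s < t \<and> t < b \<and> (\<forall>r\<in>{s..t}. dist (y r) (y s) < \<eta> / 2)"
      using s \<open>0 < \<eta>\<close>
      by (intro eventually_conj eventually_at_right_less eventually_at_rightI[of s b]
          eventually_at_right_Icc_dist_less[OF y_cont]) auto
    then show "\<forall>\<^sub>F t in at_right s. F s - e * (t - s) \<le> F t"
    proof (rule eventually_mono, elim conjE)
      fix t assume "s < t" "t < b" and close: "\<forall>r\<in>{s..t}. dist (y r) (y s) < \<eta> / 2"
      have "q r - c * (y t + \<eta>) \<le> g r" if "r \<in> {s..t}" for r
      proof -
        have "dist (y r) (y s) < \<eta> / 2" "dist (y t) (y s) < \<eta> / 2"
          using close that \<open>s < t\<close> by auto
        then have "y r \<le> y t + \<eta>" unfolding dist_real_def by linarith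
        then have "c * y r \<le> c * (y t + \<eta>)" using \<open>0 \<le> c\<close> by (rule mult_left_mono)
        then show ?thesis using g_ge[of r] that s \<open>t < b\<close> by auto
      qed
      moreover have "q integrable_on {s..t}"
        using s \<open>t < b\<close> by (intro integrable_subinterval_real[OF q_integrable]) auto
      moreover have "0 \<le> integral {s..t} q"
        using s \<open>t < b\<close> q_nonneg by (intro integral_nonneg calculation(2)) auto
      ultimately have "exp (c * (s - a)) * (y s - c * \<eta> * (t - s)) + integral {s..t} q
          \<le> exp (c * (t - a)) * y t"
        using s \<open>s < t\<close> \<open>t < b\<close> y_nonneg[of t]
        by (intro exp_weighted_increment_ge[where g = g] increments \<open>0 \<le> c\<close>) auto
      moreover have "integral {a..t} q = integral {a..s} q + integral {s..t} q"
        using s \<open>s < t\<close> \<open>t < b\<close>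
        by (intro Henstock_Kurzweil_Integration.integral_combine[symmetric]
            integrable_subinterval_real[OF q_integrable]) auto
      moreover have "c * \<eta> * exp (c * (s - a)) * (t - s) \<le> e * (t - s)"
        using \<open>c * \<eta> * exp (c * (s - a)) \<le> e\<close> \<open>s < t\<close> by (intro mult_right_mono) auto
      ultimately show "F s - e * (t - s) \<le> F t" unfolding F_def by (simp add: algebra_simps)
    qed
  qed
  then show ?thesis unfolding F_def by simp
qed

locale consensus_solution =
  fixes N :: nat and M :: "nat \<Rightarrow> nat \<Rightarrow> real \<Rightarrow> real" and x :: "nat \<Rightarrow> real \<Rightarrow> real"
  assumes weights_bounded:
      "\<And>k l s. k \<in> {1..N} \<Longrightarrow> l \<in> {1..N} \<Longrightarrow> 0 \<le> s \<Longrightarrow> 0 \<le> M k l s \<and> M k l s \<le> 1"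
    and solution: "caratheodory_solution N M x"
begin

lemma increment_has_integral:
  assumes "k \<in> {1..N}" "0 \<le> s" "s \<le> t"
  shows "(cons_rhs N M x k has_integral (x k t - x k s)) {s..t}"
proof -
  let ?g = "cons_rhs N M x k"
  have from_0: "(?g has_integral (x k u - x k 0)) {0..u}" if "0 \<le> u" for u
    using solution assms(1) that unfolding caratheodory_solution_def by blast
  have "0 \<le> t" using assms by simp
  then have "?g integrable_on {0..t}" by (rule has_integral_integrable[OF from_0])
  then have "integral {0..s} ?g + integral {s..t} ?g = integral {0..t} ?g"
    and "?g integrable_on {s..t}"
    using assms by (auto intro: Henstock_Kurzweil_Integration.integral_combine
        integrable_subinterval_real[of _ 0 t])
  moreover have "integral {0..s} ?g = x k s - x k 0" "integral {0..t} ?g = x k t - x k 0"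
    using integral_unique[OF from_0] assms by auto
  ultimately show ?thesis by (simp add: has_integral_integrable_integral)
qed

lemma continuous_on_trajectory:
  assumes "k \<in> {1..N}"
  shows "continuous_on {0..b} (x k)"
  by (rule continuous_on_if_integral_increments) (use increment_has_integral assms in auto)

lemma cons_rhs_ge_neg:
  assumes k: "k \<in> {1..N}" and "0 \<le> r" "0 \<le> e"
    and gaps: "\<And>l. l \<in> {1..N} \<Longrightarrow> - e \<le> x l r - x k r"
  shows "- e \<le> cons_rhs N M x k r"
proof -
  have "- e \<le> M k l r * (x l r - x k r)" if l: "l \<in> {1..N}" for l
  proof -
    have "0 \<le> M k l r" "M k l r \<le> 1" using weights_bounded[OF k l \<open>0 \<le> r\<close>] by auto
    then have "- e \<le> M k l r * (- e)" using \<open>0 \<le> e\<close> by (simp add: mult_left_le_one_le)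
    also have "\<dots> \<le> M k l r * (x l r - x k r)"
      using gaps[OF l] \<open>0 \<le> M k l r\<close> by (rule mult_left_mono)
    finally show ?thesis .
  qed
  then have "real N * (- e) \<le> (\<Sum>l\<in>{1..N}. M k l r * (x l r - x k r))"
    using sum_mono[of "{1..N}" "\<lambda>_. - e"] by simp
  moreover have "0 < real N" using k by simp
  ultimately show ?thesis unfolding cons_rhs_def by (simp add: field_simps)
qed

lemma cons_rhs_ge:
  assumes k: "k \<in> {1..N}" and "0 \<le> r" and above: "\<And>l. l \<in> {1..N} \<Longrightarrow> \<alpha> \<le> x l r"
  shows "(\<Sum>l\<in>{1..N} - {k}. M k l r * (x l r - \<alpha>)) / N - (real N - 1) / N * (x k r - \<alpha>)
    \<le> cons_rhs N M x k r"
proof -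
  let ?A = "{1..N} - {k}"
  have "(\<Sum>l\<in>?A. M k l r * (x l r - \<alpha>) - (x k r - \<alpha>)) \<le> (\<Sum>l\<in>?A. M k l r * (x l r - x k r))"
  proof (rule sum_mono)
    fix l assume l: "l \<in> ?A"
    have "M k l r * (x k r - \<alpha>) \<le> x k r - \<alpha>"
      using weights_bounded[OF k _ \<open>0 \<le> r\<close>, of l] l above[OF k] by (simp add: mult_left_le_one_le)
    then show "M k l r * (x l r - \<alpha>) - (x k r - \<alpha>) \<le> M k l r * (x l r - x k r)"
      by (simp add: algebra_simps)
  qed
  also have "\<dots> = (\<Sum>l\<in>{1..N}. M k l r * (x l r - x k r))"
    using k by (intro sum.mono_neutral_left) auto
  finally have "(\<Sum>l\<in>?A. M k l r * (x l r - \<alpha>)) - (real N - 1) * (x k r - \<alpha>)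
      \<le> (\<Sum>l\<in>{1..N}. M k l r * (x l r - x k r))"
    using k by (simp add: sum_subtractf of_nat_diff)
  then have "((\<Sum>l\<in>?A. M k l r * (x l r - \<alpha>)) - (real N - 1) * (x k r - \<alpha>)) / N
      \<le> (\<Sum>l\<in>{1..N}. M k l r * (x l r - x k r)) / N"
    by (rule divide_right_mono) simp
  then show ?thesis using k unfolding cons_rhs_def by (simp add: field_simps)
qed

lemma lower_bound_preserved:
  assumes initial: "\<And>k. k \<in> {1..N} \<Longrightarrow> \<alpha> \<le> x k 0" and k: "k \<in> {1..N}" and "0 \<le> b"
  shows "\<alpha> \<le> x k b"
proof -
  \<comment> \<open>The minimum m is nondecreasing: for an agent realising it at t, every summand of its
    right-hand side is at least -e on [s,t] once t is close enough to s.\<close>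
  define m where "m t = Min ((\<lambda>l. x l t) ` {1..N})" for t
  have fin: "finite {1..N}" and ne: "{1..N} \<noteq> {}" using k by auto
  have m_le: "m t \<le> x l t" if "l \<in> {1..N}" for l t
    unfolding m_def using fin that by simp
  have "m 0 \<le> m b"
  proof (rule lower_right_Dini_nonneg_imp_increasing[OF \<open>0 \<le> b\<close>])
    show "continuous_on {0..b} m"
      unfolding m_def by (intro continuous_on_Min fin ne continuous_on_trajectory)
    fix s e :: real assume s: "s \<in> {0..<b}" and "0 < e"
    have "\<forall>l\<in>{1..N}. \<forall>\<^sub>F t in at_right s. \<forall>r\<in>{s..t}. dist (x l r) (x l s) < e / 4"
      using s \<open>0 < e\<close> by (intro ballI eventually_at_right_Icc_dist_less[OF continuous_on_trajectory]) auto
    then have "\<forall>\<^sub>F t in at_right s. \<forall>l\<in>{1..N}. \<forall>r\<in>{s..t}. dist (x l r) (x l s) < e / 4"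
      by (rule eventually_ball_finite[OF fin])
    then show "\<forall>\<^sub>F t in at_right s. m s - e * (t - s) \<le> m t"
      using eventually_at_right_less
    proof eventually_elim
      case (elim t)
      then have close: "\<bar>x l r - x l s\<bar> < e / 4" if "l \<in> {1..N}" "r \<in> {s..t}" for l r
        using that by (simp add: dist_real_def)
      have "m t \<in> (\<lambda>l. x l t) ` {1..N}" unfolding m_def using fin ne by (intro Min_in) auto
      then obtain k0 where k0: "k0 \<in> {1..N}" "x k0 t = m t" by auto
      have "(\<lambda>_. - e) r \<le> cons_rhs N M x k0 r" if r: "r \<in> {s..t}" for r
      proof (rule cons_rhs_ge_neg[OF k0(1)])
        have t: "t \<in> {s..t}" using \<open>s < t\<close> by simp
        fix l assume l: "l \<in> {1..N}"
        show "- e \<le> x l r - x k0 r"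
          using close[OF l r] close[OF l t] close[OF k0(1) r] close[OF k0(1) t] m_le[OF l, of t] k0(2)
          by linarith
      qed (use r s \<open>0 < e\<close> in auto)
      moreover have "((\<lambda>_. - e) has_integral - e * (t - s)) {s..t}"
        using has_integral_const_real[of "- e" s t] \<open>s < t\<close> by (simp add: mult.commute)
      ultimately have "- e * (t - s) \<le> x k0 t - x k0 s"
        using has_integral_le[OF _ increment_has_integral[OF k0(1)]] s \<open>s < t\<close> by auto
      then show ?case using m_le[OF k0(1), of s] k0(2) by linarith
    qed
  qed
  moreover have "\<alpha> \<le> m 0" unfolding m_def using fin ne initial by simp
  ultimately show ?thesis using m_le[OF k, of b] by linarith
qed

lemma decay_lower_bound:
  assumes initial: "\<And>k. k \<in> {1..N} \<Longrightarrow> \<alpha> \<le> x k 0" and j: "j \<in> {1..N}" and "0 \<le> t"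
  shows "exp (- ((real N - 1) / N * t)) * (x j 0 - \<alpha>) \<le> x j t - \<alpha>"
proof -
  let ?c = "(real N - 1) / N"
  have above: "\<alpha> \<le> x l r" if "l \<in> {1..N}" "0 \<le> r" for l r
    using lower_bound_preserved[OF initial that] .
  have "(x j 0 - \<alpha>) + integral {0..t} (\<lambda>_. 0) \<le> exp (?c * (t - 0)) * (x j t - \<alpha>)"
  proof (rule Gronwall_lower_bound[where g = "cons_rhs N M x j"])
    show "0 \<le> ?c" using j by simp
    show "(cons_rhs N M x j has_integral (x j v - \<alpha> - (x j u - \<alpha>))) {u..v}"
      if "0 \<le> u" "u \<le> v" "v \<le> t" for u v
      using increment_has_integral[OF j that(1,2)] by simp
    show "0 - ?c * (x j r - \<alpha>) \<le> cons_rhs N M x j r" if "r \<in> {0..t}" for r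
    proof -
      have "0 \<le> (\<Sum>l\<in>{1..N} - {j}. M j l r * (x l r - \<alpha>)) / N"
        using weights_bounded[OF j] above that by (auto intro!: sum_nonneg divide_nonneg_nonneg)
      with cons_rhs_ge[OF j _ above] that show ?thesis by fastforce
    qed
  qed (use \<open>0 \<le> t\<close> above j in auto)
  then show ?thesis by (simp add: exp_minus field_simps)
qed

lemma edge_gain_lower_bound:
  assumes initial: "\<And>k. k \<in> {1..N} \<Longrightarrow> \<alpha> \<le> x k 0"
    and i: "i \<in> {1..N}" and j: "j \<in> {1..N}" and "i \<noteq> j" and "0 \<le> T"
    and M_integrable: "M i j integrable_on {0..T}"
  shows "integral {0..T} (M i j) / N * exp (- 2 * ((real N - 1) / N) * T) * (x j 0 - \<alpha>)
    \<le> x i T - \<alpha>"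
proof -
  let ?c = "(real N - 1) / N"
  define K where "K = exp (- (?c * T)) * (x j 0 - \<alpha>) / N"
  have above: "\<alpha> \<le> x l r" if "l \<in> {1..N}" "0 \<le> r" for l r
    using lower_bound_preserved[OF initial that] .
  have "0 \<le> ?c" using i by simp
  have "0 \<le> K" unfolding K_def using initial[OF j] by simp
  have "(x i 0 - \<alpha>) + integral {0..T} (\<lambda>r. K * M i j r) \<le> exp (?c * (T - 0)) * (x i T - \<alpha>)"
  proof (rule Gronwall_lower_bound[where g = "cons_rhs N M x i"])
    show "(cons_rhs N M x i has_integral (x i v - \<alpha> - (x i u - \<alpha>))) {u..v}"
      if "0 \<le> u" "u \<le> v" "v \<le> T" for u v
      using increment_has_integral[OF i that(1,2)] by simp
    show "K * M i j r - ?c * (x i r - \<alpha>) \<le> cons_rhs N M x i r" if r: "r \<in> {0..T}" for r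
    proof -
      have "?c * r \<le> ?c * T" using r \<open>0 \<le> ?c\<close> by (intro mult_left_mono) auto
      then have "exp (- (?c * T)) * (x j 0 - \<alpha>) \<le> exp (- (?c * r)) * (x j 0 - \<alpha>)"
        using initial[OF j] by (intro mult_right_mono) auto
      also have "\<dots> \<le> x j r - \<alpha>" using decay_lower_bound[OF initial j] r by simp
      finally have "K \<le> (x j r - \<alpha>) / N" unfolding K_def by (simp add: divide_right_mono)
      then have "M i j r * K \<le> M i j r * ((x j r - \<alpha>) / N)"
        using weights_bounded[OF i j, of r] r by (intro mult_left_mono) auto
      then have "K * M i j r \<le> M i j r * (x j r - \<alpha>) / N" by (simp add: mult.commute)
      also have "\<dots> \<le> (\<Sum>l\<in>{1..N} - {i}. M i l r * (x l r - \<alpha>)) / N"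
        using weights_bounded[OF i] above j \<open>i \<noteq> j\<close> r
        by (intro divide_right_mono member_le_sum[of j "{1..N} - {i}"]) auto
      finally show ?thesis using cons_rhs_ge[OF i _ above] r by fastforce
    qed
  qed (use \<open>0 \<le> ?c\<close> \<open>0 \<le> K\<close> \<open>0 \<le> T\<close> above i weights_bounded[OF i j]
      integrable_on_mult_right[OF M_integrable] in auto)
  moreover have "0 \<le> x i 0 - \<alpha>" using initial[OF i] by simp
  ultimately have "K * integral {0..T} (M i j) \<le> exp (?c * T) * (x i T - \<alpha>)" by simp
  then have "exp (- (?c * T)) * (K * integral {0..T} (M i j)) \<le> x i T - \<alpha>"
    by (simp add: exp_minus field_simps)
  moreover have "exp (- 2 * ?c * T) = exp (- (?c * T)) * exp (- (?c * T))"
    by (simp add: exp_add[symmetric] field_simps)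
  ultimately show ?thesis unfolding K_def by (simp add: mult_ac)
qed

end

theorem proposition5:
  fixes N :: nat and T \<mu> \<alpha> :: real
    and M :: "nat \<Rightarrow> nat \<Rightarrow> real \<Rightarrow> real" and x :: "nat \<Rightarrow> real \<Rightarrow> real"
    and i j :: nat
  assumes "N \<ge> 2" and "T > 0" and "\<mu> > 0"
    and "\<And>k l. k \<in> {1..N} \<Longrightarrow> l \<in> {1..N} \<Longrightarrow> M k l \<in> borel_measurable (lebesgue_on {0..})"
    and "\<And>k l s. k \<in> {1..N} \<Longrightarrow> l \<in> {1..N} \<Longrightarrow> s \<ge> 0 \<Longrightarrow> 0 \<le> M k l s \<and> M k l s \<le> 1"
    and "caratheodory_solution N M x"
    and "\<And>k. k \<in> {1..N} \<Longrightarrow> x k 0 \<ge> \<alpha>"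
    and "i \<in> {1..N}" and "j \<in> {1..N}"
    and "conn_edge T \<mu> M 0 i j"
  shows "x i T \<ge> \<alpha> + (\<mu> * T / (real N + \<mu> * T)) * exp (- 2 * ((real N - 1) / real N) * T) * (x j 0 - \<alpha>)"
proof -
  interpret consensus_solution N M x using assms(5,6) by unfold_locales
  note initial = assms(7) and i = assms(8) and j = assms(9)
  define \<eta> where "\<eta> = \<mu> * T / (real N + \<mu> * T)"
  define c where "c = (real N - 1) / real N"
  have "0 \<le> c" "0 \<le> x j 0 - \<alpha>" using i initial[OF j] unfolding c_def by simp_all
  have "\<eta> * exp (- 2 * c * T) * (x j 0 - \<alpha>) \<le> x i T - \<alpha>"
  proof (cases "i = j")
    case True
    have "\<eta> \<le> 1"
      unfolding \<eta>_def using assms(2,3) by (subst divide_le_eq_1) (auto intro: add_nonneg_pos)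
    moreover have "exp (- 2 * c * T) \<le> exp (- (c * T))" using \<open>0 \<le> c\<close> assms(2) by simp
    ultimately have "\<eta> * exp (- 2 * c * T) * (x j 0 - \<alpha>) \<le> 1 * exp (- (c * T)) * (x j 0 - \<alpha>)"
      using \<open>0 \<le> x j 0 - \<alpha>\<close> unfolding \<eta>_def by (intro mult_right_mono mult_mono) simp_all
    also have "\<dots> \<le> x i T - \<alpha>" using decay_lower_bound[OF initial j] assms(2) True unfolding c_def by simp
    finally show ?thesis .
  next
    case False
    have edge: "\<mu> * T \<le> integral {0..T} (M i j)"
      using assms(2,10) unfolding conn_edge_def by (simp add: field_simps)
    have "M i j integrable_on {0..T}"
      using edge not_integrable_integral mult_pos_pos[OF assms(3,2)] by fastforce
    have "\<eta> \<le> \<mu> * T / N"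
      unfolding \<eta>_def using assms(2,3) i by (intro divide_left_mono) (auto intro!: mult_pos_pos add_pos_pos)
    also have "\<dots> \<le> integral {0..T} (M i j) / N" using edge by (simp add: divide_right_mono)
    finally have "\<eta> * exp (- 2 * c * T) * (x j 0 - \<alpha>)
        \<le> integral {0..T} (M i j) / N * exp (- 2 * c * T) * (x j 0 - \<alpha>)"
      using \<open>0 \<le> x j 0 - \<alpha>\<close> by (intro mult_right_mono) simp_all
    also have "\<dots> \<le> x i T - \<alpha>"
      using edge_gain_lower_bound[OF initial i j False] assms(2) \<open>M i j integrable_on {0..T}\<close>
      unfolding c_def by simp
    finally show ?thesis .
  qed
  then show ?thesis unfolding \<eta>_def c_def by simp
qed

end
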